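(* Let $l\ge 3$ and suppose Erdős's Girth Conjecture holds for $l-1$, i.e. there exist a constant $c>0$ and a family of graphs $\{G_n\}$ with $|V(G_n)|=n$, $|E(G_n)|\ge c n^{1+1/(l-1)}$ and girth of $G_n$ greater than $2(l-1)$. Then $$ex(n,C_{2l},\{C_3,C_4,\dots,C_{2l-1}\})=\Theta(n^{2l/(l-1)}).$$
   Context: $C_k$ denotes the cycle with $k$ vertices. For a graph $H$ and a family of graphs $\mathcal F$, $ex(n,H,\mathcal F)$ is the maximum number of subgraphs isomorphic to $H$ in an $n$-vertex graph containing no member of $\mathcal F$ as a subgraph. The girth of a graph is the length of its shortest cycle. Asymptotic notation is as $n\to\infty$ with $l$ fixed. *)

theory Defs
  imports Complex_Main "HOL-Library.Landau_Symbols"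
begin

definition simple_graph :: "nat \<Rightarrow> nat set set \<Rightarrow> bool" where
  "simple_graph n E \<longleftrightarrow> (\<forall>e\<in>E. \<exists>u v. e = {u, v} \<and> u \<noteq> v \<and> u < n \<and> v < n)"

definition cycle_edges :: "nat list \<Rightarrow> nat set set" where
  "cycle_edges vs = {{vs ! i, vs ! ((i + 1) mod length vs)} | i. i < length vs}"

text \<open>F is (the edge set of) a subgraph of E isomorphic to C_k.\<close>
definition is_cycle_subgraph :: "nat set set \<Rightarrow> nat \<Rightarrow> nat set set \<Rightarrow> bool" where
  "is_cycle_subgraph E k F \<longleftrightarrow>
     (\<exists>vs. length vs = k \<and> k \<ge> 3 \<and> distinct vs \<and> F = cycle_edges vs \<and> F \<subseteq> E)"

definition has_cycle :: "nat set set \<Rightarrow> nat \<Rightarrow> bool" where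
  "has_cycle E k \<longleftrightarrow> (\<exists>F. is_cycle_subgraph E k F)"

definition num_cycles :: "nat set set \<Rightarrow> nat \<Rightarrow> nat" where
  "num_cycles E k = card {F. is_cycle_subgraph E k F}"

definition ex_even_cycle :: "nat \<Rightarrow> nat \<Rightarrow> nat" where
  "ex_even_cycle l n = Max {num_cycles E (2 * l) | E.
      simple_graph n E \<and> (\<forall>k. 3 \<le> k \<and> k \<le> 2 * l - 1 \<longrightarrow> \<not> has_cycle E k)}"

end

(* Upper bound: a graph without cycles of length 3, ..., 2l-1 joins any two vertices by at most one
   path with l-1 edges, so a 2l-cycle is determined by two antipodal oriented edges.  There are thus
   at most 16 |E|^2 such cycles, and the Moore bound |E| = O(n^(1+1/(l-1))) gives O(n^(2l/(l-1))).

   Lower bound: take a graph of girth greater than 2l-2 with c n^(1+1/(l-1)) edges and a cut holding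
   half of them.  The cut is bipartite, hence free of all cycles of length 3, ..., 2l-1.  Inside it
   choose a subgraph of minimum degree D ~ n^(1/(l-1)); from each vertex there start at least
   (D-1)^l paths with l edges.  By Cauchy-Schwarz there are about D^(2l) ordered pairs of distinct such
   paths with common ends; by the girth, the two paths of a pair are internally disjoint and form a
   2l-cycle, and each 2l-cycle arises from at most (2l)^2 pairs. *)

theory Submission
  imports Defs "HOL-Analysis.Convex"
begin

section \<open>Walks, paths and short cycles\<close>

fun walk :: "'a set set \<Rightarrow> 'a list \<Rightarrow> bool" where
  "walk E (x # y # ys) \<longleftrightarrow> {x, y} \<in> E \<and> walk E (y # ys)"
| "walk E _ \<longleftrightarrow> True"

lemma walk_Cons: "walk E (x # xs) \<longleftrightarrow> walk E xs \<and> (xs \<noteq> [] \<longrightarrow> {x, hd xs} \<in> E)"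
  by (cases xs) auto

lemma walk_nth: "walk E xs \<longleftrightarrow> (\<forall>i. Suc i < length xs \<longrightarrow> {xs ! i, xs ! Suc i} \<in> E)"
proof (induction E xs rule: walk.induct)
  case (1 E x y ys)
  show ?case
  proof
    assume "walk E (x # y # ys)"
    then show "\<forall>i. Suc i < length (x # y # ys) \<longrightarrow> {(x # y # ys) ! i, (x # y # ys) ! Suc i} \<in> E"
      using 1 by (auto simp: nth_Cons split: nat.splits)
  next
    assume h: "\<forall>i. Suc i < length (x # y # ys) \<longrightarrow> {(x # y # ys) ! i, (x # y # ys) ! Suc i} \<in> E"
    have "{x,y} \<in> E" using h[rule_format, of 0] by simp
    moreover have "walk E (y # ys)" unfolding 1
    proof (intro allI impI)
      fix i assume "Suc i < length (y # ys)"
      then show "{(y # ys) ! i, (y # ys) ! Suc i} \<in> E" using h[rule_format, of "Suc i"] by simp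
    qed
    ultimately show "walk E (x # y # ys)" by simp
  qed
qed auto

lemma walk_append:
  "walk E (xs @ ys) \<longleftrightarrow> walk E xs \<and> walk E ys \<and> (xs \<noteq> [] \<longrightarrow> ys \<noteq> [] \<longrightarrow> {last xs, hd ys} \<in> E)"
  by (induction xs) (auto simp: walk_Cons)

lemma walk_rev: "walk E (rev xs) \<longleftrightarrow> walk E xs"
  by (induction xs) (auto simp: walk_append walk_Cons insert_commute hd_rev last_rev)

lemma walk_take: "walk E xs \<Longrightarrow> walk E (take k xs)"
  by (metis append_take_drop_id walk_append)

lemma walk_drop: "walk E xs \<Longrightarrow> walk E (drop k xs)"
  by (metis append_take_drop_id walk_append)

definition is_path :: "'a set set \<Rightarrow> 'a list \<Rightarrow> bool" where
  "is_path E p \<longleftrightarrow> walk E p \<and> distinct p"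

lemma is_path_appendD: "is_path E (xs @ ys) \<Longrightarrow> is_path E xs \<and> is_path E ys"
  unfolding is_path_def walk_append by simp

definition cycle_lists :: "nat set set \<Rightarrow> nat \<Rightarrow> nat list set" where
  "cycle_lists E k = {vs. length vs = k \<and> 3 \<le> k \<and> distinct vs \<and> cycle_edges vs \<subseteq> E}"

lemma cycle_subgraphs_eq_image: "{F. is_cycle_subgraph E k F} = cycle_edges ` cycle_lists E k"
  unfolding is_cycle_subgraph_def cycle_lists_def by auto

lemma has_cycle_iff: "has_cycle E k \<longleftrightarrow> cycle_lists E k \<noteq> {}"
  unfolding has_cycle_def is_cycle_subgraph_def cycle_lists_def by auto

lemma cycle_edges_subset_iff_closed_walk:
  assumes "vs \<noteq> []"
  shows "cycle_edges vs \<subseteq> E \<longleftrightarrow> walk E (vs @ [hd vs])"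
proof -
  have "(vs @ [hd vs]) ! Suc i = vs ! ((i + 1) mod length vs)" if "i < length vs" for i
  proof (cases "Suc i < length vs")
    case False
    then have "Suc i = length vs" using that by simp
    then show ?thesis using assms by (simp add: nth_append hd_conv_nth)
  qed (simp add: nth_append)
  then have "cycle_edges vs \<subseteq> E \<longleftrightarrow>
      (\<forall>i. Suc i < length (vs @ [hd vs]) \<longrightarrow> {(vs @ [hd vs]) ! i, (vs @ [hd vs]) ! Suc i} \<in> E)"
    unfolding cycle_edges_def by (auto simp: nth_append)
  then show ?thesis by (simp add: walk_nth)
qed

lemma cycle_listsD:
  assumes "vs \<in> cycle_lists E k"
  shows "length vs = k" "3 \<le> k" "distinct vs" "vs \<noteq> []" "walk E (vs @ [hd vs])"
proof -
  show "length vs = k" "3 \<le> k" "distinct vs" using assms unfolding cycle_lists_def by auto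
  then show "vs \<noteq> []" by auto
  then show "walk E (vs @ [hd vs])"
    using assms cycle_edges_subset_iff_closed_walk unfolding cycle_lists_def by blast
qed

lemma cycle_list_if_closed_walk:
  assumes "distinct vs" "3 \<le> length vs" "walk E (vs @ [hd vs])"
  shows "vs \<in> cycle_lists E (length vs)"
proof -
  have "vs \<noteq> []" using assms(2) by auto
  then show ?thesis
    using assms cycle_edges_subset_iff_closed_walk[of vs E] unfolding cycle_lists_def by blast
qed

lemma has_cycle_ge_3: "has_cycle E k \<Longrightarrow> 3 \<le> k"
  unfolding has_cycle_iff cycle_lists_def by blast

lemma Union_cycle_edges: "vs \<noteq> [] \<Longrightarrow> \<Union> (cycle_edges vs) = set vs"
proof
  assume "vs \<noteq> []"
  then show "\<Union> (cycle_edges vs) \<subseteq> set vs" unfolding cycle_edges_def by auto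
  show "set vs \<subseteq> \<Union> (cycle_edges vs)"
  proof
    fix x assume "x \<in> set vs"
    then obtain i where "i < length vs" "x = vs ! i" by (auto simp: in_set_conv_nth)
    then show "x \<in> \<Union> (cycle_edges vs)" unfolding cycle_edges_def by blast
  qed
qed

definition girth_gt :: "nat set set \<Rightarrow> nat \<Rightarrow> bool" where
  "girth_gt E m \<longleftrightarrow> (\<forall>k. has_cycle E k \<longrightarrow> m < k)"

lemma girth_gt_iff: "girth_gt E m \<longleftrightarrow> (\<forall>k. 3 \<le> k \<and> k \<le> m \<longrightarrow> \<not> has_cycle E k)"
  unfolding girth_gt_def using has_cycle_ge_3 not_less by blast

lemma girth_gtD: "girth_gt E m \<Longrightarrow> has_cycle E k \<Longrightarrow> k \<le> m \<Longrightarrow> False"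
  unfolding girth_gt_def by fastforce

lemma girth_gt_mono: "girth_gt E m \<Longrightarrow> m' \<le> m \<Longrightarrow> girth_gt E m'"
  unfolding girth_gt_def by fastforce

lemma girth_gt_subset: "girth_gt E m \<Longrightarrow> H \<subseteq> E \<Longrightarrow> girth_gt H m"
  unfolding girth_gt_def has_cycle_def is_cycle_subgraph_def by blast

lemma cycle_of_internally_disjoint_paths:
  assumes "is_path E (a # us @ [b])" "is_path E (a # vs @ [b])"
    and "set us \<inter> set vs = {}" "us @ vs \<noteq> []"
  shows "a # us @ b # rev vs \<in> cycle_lists E (length us + length vs + 2)"
proof -
  have "walk E (a # us @ [b])" "walk E (b # rev vs @ [a])"
    using assms(1,2) walk_rev[of E "a # vs @ [b]"] unfolding is_path_def by auto
  then have "walk E ((a # us @ [b]) @ rev vs @ [a])"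
    by (auto simp: walk_append walk_Cons simp del: append_Cons)
  then have "walk E ((a # us @ b # rev vs) @ [hd (a # us @ b # rev vs)])" by simp
  moreover have "distinct (a # us @ b # rev vs)"
    using assms unfolding is_path_def by auto
  moreover have "3 \<le> length (a # us @ b # rev vs)" using assms(4) by (auto simp: Suc_le_eq)
  ultimately show ?thesis
    using cycle_list_if_closed_walk[of "a # us @ b # rev vs" E] by simp
qed

lemma cycle_of_diverging_paths:
  assumes "is_path E (a # p)" "is_path E (a # q)" "p \<noteq> []" "q \<noteq> []"
    and "last p = last q" "hd p \<noteq> hd q"
  shows "\<exists>k \<le> length p + length q. has_cycle E k"
proof -
  have "\<exists>x \<in> set p. x \<in> set q" using assms(3-5) last_in_set by metis
  then obtain us x rs where p: "p = us @ x # rs" "x \<in> set q" "\<forall>y \<in> set us. y \<notin> set q"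
    using split_list_first_prop[of p "\<lambda>x. x \<in> set q"] by blast
  obtain vs rs' where q: "q = vs @ x # rs'" using split_list[OF p(2)] by blast
  have "is_path E ((a # us @ [x]) @ rs)" "is_path E ((a # vs @ [x]) @ rs')"
    using assms(1,2) unfolding p q by simp_all
  then have "is_path E (a # us @ [x])" "is_path E (a # vs @ [x])"
    using is_path_appendD by blast+
  moreover have "set us \<inter> set vs = {}" using p(3) q by auto
  moreover have "us @ vs \<noteq> []" using assms(6) p q by auto
  ultimately have "a # us @ x # rev vs \<in> cycle_lists E (length us + length vs + 2)"
    by (rule cycle_of_internally_disjoint_paths)
  moreover have "length us + length vs + 2 \<le> length p + length q" using p q by simp
  ultimately show ?thesis unfolding has_cycle_iff by blast
qed

text \<open>After the common prefix, the first vertices where the two paths diverge and meet again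
  close a cycle of length at most \<open>length p + length q - 2\<close>.\<close>
lemma paths_eq_if_girth_gt:
  assumes "is_path E p" "is_path E q" "p \<noteq> []" "q \<noteq> []" "hd p = hd q" "last p = last q"
    and "girth_gt E (length p + length q - 2)"
  shows "p = q"
  using assms
proof (induction p arbitrary: q)
  case (Cons a p)
  then obtain q' where q: "q = a # q'" by (cases q) auto
  have empty_if_closed: "xs = []" if "distinct (a # xs)" "last (a # xs) = a" for xs
    using that by (metis distinct.simps(2) last.simps last_in_set)
  consider "p = []" "q' = []" | "p \<noteq> []" "q' \<noteq> []"
    using Cons.prems(1,2,6) empty_if_closed q unfolding is_path_def by (metis last.simps)
  then show ?case
  proof cases
    case 2
    have paths: "is_path E p" "is_path E q'"
      using Cons.prems(1,2) q unfolding is_path_def by (auto simp: walk_Cons)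
    have last_eq: "last p = last q'" using Cons.prems(6) q 2 by simp
    have girth: "girth_gt E (length p + length q')" using Cons.prems(7) q by simp
    show ?thesis
    proof (cases "hd p = hd q'")
      case True
      have "girth_gt E (length p + length q' - 2)" using girth girth_gt_mono by simp
      then show ?thesis using Cons.IH[OF paths 2 True last_eq] q by simp
    next
      case False
      obtain k where "k \<le> length p + length q'" "has_cycle E k"
        using cycle_of_diverging_paths[OF Cons.prems(1) _ 2 last_eq False] Cons.prems(2) q by blast
      then show ?thesis using girth_gtD[OF girth] by blast
    qed
  qed (use q in simp)
qed simp

lemma internally_disjoint_if_girth_gt:
  assumes "is_path E (a # us @ [b])" "is_path E (a # vs @ [b])" "us \<noteq> vs"
    and "girth_gt E (length us + length vs)"
  shows "set us \<inter> set vs = {}"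
proof (rule ccontr)
  assume "set us \<inter> set vs \<noteq> {}"
  then obtain z where "z \<in> set us" "z \<in> set vs" by blast
  then obtain us1 us2 vs1 vs2 where us: "us = us1 @ z # us2" and vs: "vs = vs1 @ z # vs2"
    by (meson split_list)
  have "is_path E ((a # us1 @ [z]) @ us2 @ [b])" "is_path E ((a # vs1 @ [z]) @ vs2 @ [b])"
    using assms(1,2) unfolding us vs by simp_all
  then have prefixes: "is_path E (a # us1 @ [z])" "is_path E (a # vs1 @ [z])"
    using is_path_appendD by blast+
  have "is_path E ((a # us1) @ z # us2 @ [b])" "is_path E ((a # vs1) @ z # vs2 @ [b])"
    using assms(1,2) unfolding us vs by simp_all
  then have suffixes: "is_path E (z # us2 @ [b])" "is_path E (z # vs2 @ [b])"
    using is_path_appendD by blast+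
  have "a # us1 @ [z] = a # vs1 @ [z]"
    by (rule paths_eq_if_girth_gt[OF prefixes])
      (use assms(4) us vs girth_gt_mono in \<open>auto\<close>)
  moreover have "z # us2 @ [b] = z # vs2 @ [b]"
    by (rule paths_eq_if_girth_gt[OF suffixes])
      (use assms(4) us vs girth_gt_mono in \<open>auto\<close>)
  ultimately show False using assms(3) us vs by simp
qed

section \<open>Dense subgraphs and the Moore bound\<close>

definition graph_on :: "'a set \<Rightarrow> 'a set set \<Rightarrow> bool" where
  "graph_on V E \<longleftrightarrow> (\<forall>e\<in>E. \<exists>u w. e = {u, w} \<and> u \<noteq> w \<and> u \<in> V \<and> w \<in> V)"

definition neighbours :: "'a set set \<Rightarrow> 'a set \<Rightarrow> 'a \<Rightarrow> 'a set" where
  "neighbours E W x = {u \<in> W. {u, x} \<in> E}"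

lemma simple_graph_iff_graph_on: "simple_graph n E \<longleftrightarrow> graph_on {0..<n} E"
  unfolding simple_graph_def graph_on_def by auto

lemma graph_on_subset: "graph_on V E \<Longrightarrow> H \<subseteq> E \<Longrightarrow> graph_on V H"
  unfolding graph_on_def by blast

lemma graph_on_finite: "finite V \<Longrightarrow> graph_on V E \<Longrightarrow> finite E"
  unfolding graph_on_def by (rule finite_subset[of E "Pow V"]) auto

lemma graph_on_no_loop: "graph_on V E \<Longrightarrow> {x} \<notin> E"
  unfolding graph_on_def by (metis doubleton_eq_iff insert_absorb2)

lemma graph_on_edge_at:
  assumes "graph_on V E" "e \<in> E" "x \<in> e"
  obtains u where "e = {x, u}" "u \<noteq> x" "u \<in> V"
  using assms unfolding graph_on_def by (metis empty_iff insert_commute insert_iff)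

lemma card_edges_at_le_degree:
  assumes "finite V" "graph_on V E"
  shows "card {e \<in> E. x \<in> e} \<le> card (neighbours E V x)"
proof -
  have "{e \<in> E. x \<in> e} \<subseteq> (\<lambda>u. {u, x}) ` neighbours E V x"
  proof
    fix e assume e: "e \<in> {e \<in> E. x \<in> e}"
    then obtain u where "e = {x, u}" "u \<in> V" using graph_on_edge_at[OF assms(2)] by blast
    then show "e \<in> (\<lambda>u. {u, x}) ` neighbours E V x"
      using e unfolding neighbours_def by (auto simp: insert_commute)
  qed
  moreover have "finite (neighbours E V x)" using assms(1) unfolding neighbours_def by simp
  ultimately show ?thesis by (meson card_image_le card_mono finite_imageI le_trans)
qed

text \<open>Repeatedly deleting a vertex of degree at most D keeps the edge density above D.\<close>
lemma subgraph_min_degree_gt: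
  assumes "finite V" "graph_on V E" "D * real (card V) < real (card E)" "D \<ge> 0"
  shows "\<exists>W \<subseteq> V. W \<noteq> {} \<and> (\<forall>x\<in>W. D < real (card (neighbours E W x)))"
  using assms
proof (induction "card V" arbitrary: V E rule: less_induct)
  case less
  show ?case
  proof (cases "\<forall>x\<in>V. D < real (card (neighbours E V x))")
    case True
    have "V \<noteq> {}" using less.prems(2,3) unfolding graph_on_def by auto
    then show ?thesis using True by blast
  next
    case False
    then obtain x where x: "x \<in> V" "real (card (neighbours E V x)) \<le> D" by force
    define E' where "E' = {e \<in> E. x \<notin> e}"
    have "E = E' \<union> {e \<in> E. x \<in> e}" unfolding E'_def by auto
    then have "card E \<le> card E' + card {e \<in> E. x \<in> e}"
      by (metis card_Un_le)
    then have "real (card E) \<le> real (card E') + D"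
      using card_edges_at_le_degree[OF less.prems(1,2), of x] x(2) by linarith
    moreover have "card V > 0" using x(1) less.prems(1) card_gt_0_iff by blast
    then have "D * real (card V) = D * real (card (V - {x})) + D"
      using x(1) less.prems(1) by (simp add: of_nat_diff algebra_simps)
    ultimately have "D * real (card (V - {x})) < real (card E')"
      using less.prems(3) by linarith
    moreover have "graph_on (V - {x}) E'" using less.prems(2) unfolding graph_on_def E'_def by fastforce
    moreover have "card (V - {x}) < card V" using x(1) less.prems(1) by (meson card_Diff1_less)
    ultimately obtain W where W: "W \<subseteq> V - {x}" "W \<noteq> {}" "\<forall>y\<in>W. D < real (card (neighbours E' W y))"
      using less.hyps less.prems(1,4) by (metis finite_Diff)
    have "neighbours E' W y = neighbours E W y" if "y \<in> W" for y
      using W(1) that unfolding neighbours_def E'_def by auto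
    then show ?thesis using W by (intro exI[of _ W]) auto
  qed
qed

definition paths_from :: "'a set set \<Rightarrow> 'a set \<Rightarrow> 'a \<Rightarrow> nat \<Rightarrow> 'a list set" where
  "paths_from E W v k = {p. length p = Suc k \<and> hd p = v \<and> is_path E p \<and> set p \<subseteq> W}"

lemma paths_fromD:
  assumes "p \<in> paths_from E W v k"
  shows "length p = Suc k" "hd p = v" "is_path E p" "set p \<subseteq> W" "p \<noteq> []" "last p \<in> W"
proof -
  show "length p = Suc k" "hd p = v" "is_path E p" "set p \<subseteq> W"
    using assms unfolding paths_from_def by auto
  then show "p \<noteq> []" by auto
  then show "last p \<in> W" using \<open>set p \<subseteq> W\<close> last_in_set by blast
qed

lemma finite_paths_from:
  assumes "finite W"
  shows "finite (paths_from E W v k)"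
  unfolding paths_from_def
  by (rule finite_subset[OF _ finite_lists_length_eq[OF assms, of "Suc k"]]) auto

text \<open>A neighbour of the last vertex lying further back on the path would close a short cycle.\<close>
lemma neighbours_last_on_path:
  assumes "p \<in> paths_from E W v k" "\<forall>y. {y} \<notin> E" "girth_gt E (Suc k)"
  shows "neighbours E W (last p) \<inter> set p \<subseteq> {p ! (k - 1)}"
proof
  fix x assume x: "x \<in> neighbours E W (last p) \<inter> set p"
  note p = paths_fromD[OF assms(1)]
  obtain i where i: "i < Suc k" "x = p ! i" using x p(1) by (auto simp: in_set_conv_nth)
  have last_p: "last p = p ! k" using p(1,5) by (simp add: last_conv_nth)
  have edge: "{p ! i, last p} \<in> E" using x i unfolding neighbours_def by auto
  then have "i \<noteq> k" using last_p assms(2) by auto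
  moreover have "\<not> i + 2 \<le> k"
  proof
    assume "i + 2 \<le> k"
    then have "3 \<le> length (drop i p)" using p(1) by simp
    moreover have "walk E (drop i p @ [hd (drop i p)])"
      using walk_drop[of E p i] p(1,3,5) edge i(1)
      by (auto simp: walk_append hd_drop_conv_nth insert_commute is_path_def)
    moreover have "distinct (drop i p)" using p(3) unfolding is_path_def by simp
    ultimately have "drop i p \<in> cycle_lists E (length (drop i p))"
      by (rule cycle_list_if_closed_walk[rotated])
    then have "has_cycle E (length (drop i p))" unfolding has_cycle_iff by blast
    then show False by (rule girth_gtD[OF assms(3)]) (simp add: p(1))
  qed
  ultimately have "i = k - 1" using i(1) by linarith
  then show "x \<in> {p ! (k - 1)}" using i by simp
qed

lemma extend_paths_from:
  "(\<lambda>(p, u). p @ [u]) ` (SIGMA p:paths_from E W v k. neighbours E W (last p) - set p)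
     \<subseteq> paths_from E W v (Suc k)"
  by (auto simp: paths_from_def neighbours_def is_path_def walk_append insert_commute hd_append)

lemma inj_on_snoc: "inj_on (\<lambda>(p, u). p @ [u]) A"
  by (auto simp: inj_on_def)

lemma card_paths_from_ge:
  assumes "finite W" "v \<in> W" "\<forall>y. {y} \<notin> E" "\<forall>x\<in>W. d \<le> real (card (neighbours E W x))"
    and "d \<ge> 1" "girth_gt E k"
  shows "(d - 1) ^ k \<le> real (card (paths_from E W v k))"
  using assms(6)
proof (induction k)
  case 0
  have "paths_from E W v 0 = {[v]}"
    using assms(2) unfolding paths_from_def is_path_def by (auto simp: length_Suc_conv)
  then show ?case by simp
next
  case (Suc k)
  let ?P = "paths_from E W v k" and ?N = "\<lambda>p. neighbours E W (last p) - set p"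
  have fin_N: "finite (?N p)" for p using assms(1) unfolding neighbours_def by simp
  have "d - 1 \<le> real (card (?N p))" if p: "p \<in> ?P" for p
  proof -
    have "neighbours E W (last p) \<inter> set p \<subseteq> {p ! (k - 1)}"
      using neighbours_last_on_path[OF p] assms(3) Suc.prems by blast
    then have "card (neighbours E W (last p) \<inter> set p) \<le> 1"
      using card_mono[of "{p ! (k - 1)}"] by simp
    moreover have "card (neighbours E W (last p)) = card (neighbours E W (last p) \<inter> set p) + card (?N p)"
      by (rule card_Int_Diff) (use fin_N assms(1) in \<open>simp add: neighbours_def\<close>)
    moreover have "d \<le> real (card (neighbours E W (last p)))"
      using assms(4) paths_fromD(6)[OF p] by blast
    ultimately show ?thesis by linarith
  qed
  then have "real (card ?P) * (d - 1) \<le> (\<Sum>p\<in>?P. real (card (?N p)))"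
    using sum_mono[of ?P "\<lambda>_. d - 1"] by simp
  also have "\<dots> = real (card (SIGMA p:?P. ?N p))"
    using finite_paths_from[OF assms(1)] fin_N by (simp add: card_SigmaI)
  also have "\<dots> \<le> real (card (paths_from E W v (Suc k)))"
    using card_inj_on_le[OF inj_on_snoc extend_paths_from finite_paths_from[OF assms(1)]] by simp
  finally have "real (card ?P) * (d - 1) \<le> real (card (paths_from E W v (Suc k)))" .
  moreover have "(d - 1) ^ k * (d - 1) \<le> real (card ?P) * (d - 1)"
    using Suc.IH[OF girth_gt_mono[OF Suc.prems]] assms(5) by (intro mult_right_mono) auto
  ultimately show ?case unfolding power_Suc2 by linarith
qed

lemma inj_on_last_paths_from:
  assumes "girth_gt E (2 * k)"
  shows "inj_on last (paths_from E W v k)"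
proof
  fix p q assume p: "p \<in> paths_from E W v k" and q: "q \<in> paths_from E W v k" and "last p = last q"
  have "length p + length q - 2 = 2 * k" using paths_fromD(1)[OF p] paths_fromD(1)[OF q] by simp
  then show "p = q"
    using paths_eq_if_girth_gt[of E p q] paths_fromD[OF p] paths_fromD[OF q] assms \<open>last p = last q\<close>
    by (simp add: mult_2)
qed

lemma power_powr_one_div: "0 < x \<Longrightarrow> (x powr (1 / real k)) ^ m = x powr (real m / real k)"
  by (simp add: powr_realpow[symmetric] powr_powr)

lemma powr_one_div_power: "0 < x \<Longrightarrow> k \<noteq> 0 \<Longrightarrow> (x powr (1 / real k)) ^ k = x"
  by (simp add: power_powr_one_div)

text \<open>In a subgraph of minimum degree \<open>D\<close> there are at least \<open>(D - 1) ^ k\<close> paths with \<open>k\<close>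
  edges from a fixed vertex, and by the girth they have distinct ends.\<close>
lemma moore_bound:
  assumes "simple_graph n E" "k \<ge> 1" "girth_gt E (2 * k)"
  shows "real (card E) \<le> real n * (real n powr (1 / real k) + 2)"
proof (rule ccontr)
  define D where "D = real n powr (1 / real k) + 2"
  have graph: "graph_on {0..<n} E" using assms(1) simple_graph_iff_graph_on by blast
  assume "\<not> ?thesis"
  moreover have "D * real (card {0..<n}) = real n * (real n powr (1 / real k) + 2)"
    unfolding D_def by simp
  ultimately have dense: "D * real (card {0..<n}) < real (card E)" by linarith
  have D_ge_1: "D \<ge> 1" unfolding D_def using powr_ge_zero[of "real n" "1 / real k"] by linarith
  obtain W where W: "W \<subseteq> {0..<n}" "W \<noteq> {}" "\<forall>x\<in>W. D < real (card (neighbours E W x))"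
    using subgraph_min_degree_gt[OF finite_atLeastLessThan graph dense] D_ge_1 by auto
  then obtain v where v: "v \<in> W" by blast
  have fin_W: "finite W" using W(1) finite_subset by blast
  have n_pos: "real n > 0" using v W(1) by auto
  have "(D - 1) ^ k \<le> real (card (paths_from E W v k))"
  proof (rule card_paths_from_ge[OF fin_W v])
    show "\<forall>y. {y} \<notin> E" using graph_on_no_loop[OF graph] by blast
    show "\<forall>x\<in>W. D \<le> real (card (neighbours E W x))" using W(3) less_imp_le by blast
    show "girth_gt E k" using girth_gt_mono[OF assms(3)] by simp
  qed (fact D_ge_1)
  also have "\<dots> = real (card (last ` paths_from E W v k))"
    by (rule arg_cong[OF card_image[OF inj_on_last_paths_from[OF assms(3)], symmetric]])
  also have "\<dots> \<le> real (card W)"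
  proof -
    have "last ` paths_from E W v k \<subseteq> W" by (rule image_subsetI) (rule paths_fromD(6))
    from card_mono[OF fin_W this] show ?thesis by (rule of_nat_mono)
  qed
  also have "\<dots> \<le> real n"
    using card_mono[OF finite_atLeastLessThan W(1)] by simp
  also have "\<dots> = (real n powr (1 / real k)) ^ k"
    using powr_one_div_power[OF n_pos, of k] assms(2) by simp
  also have "\<dots> < (D - 1) ^ k"
    unfolding D_def using assms(2) by (intro power_strict_mono) auto
  finally show False by simp
qed

section \<open>Counting cycles through their vertex lists\<close>

lemma finite_cycle_lists:
  assumes "finite V" "graph_on V E"
  shows "finite (cycle_lists E k)"
proof (rule finite_subset[OF _ finite_lists_length_eq[OF assms(1), of k]])
  show "cycle_lists E k \<subseteq> {vs. set vs \<subseteq> V \<and> length vs = k}"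
  proof
    fix vs assume vs: "vs \<in> cycle_lists E k"
    have "set vs = \<Union> (cycle_edges vs)" using Union_cycle_edges[OF cycle_listsD(4)[OF vs]] by simp
    also have "\<dots> \<subseteq> \<Union> E" using vs unfolding cycle_lists_def by auto
    also have "\<dots> \<subseteq> V" using assms(2) unfolding graph_on_def by auto
    finally show "vs \<in> {vs. set vs \<subseteq> V \<and> length vs = k}" using cycle_listsD(1)[OF vs] by simp
  qed
qed

lemma num_cycles_le_card_cycle_lists:
  assumes "finite V" "graph_on V E"
  shows "num_cycles E k \<le> card (cycle_lists E k)"
  unfolding num_cycles_def cycle_subgraphs_eq_image
  using card_image_le[OF finite_cycle_lists[OF assms]] .

lemma cycle_edges_neighbour:
  assumes "distinct vs" "0 < j" "Suc j < length vs" "{vs ! j, y} \<in> cycle_edges vs"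
  shows "y = vs ! (j - 1) \<or> y = vs ! Suc j"
proof -
  let ?L = "length vs"
  obtain m where m: "m < ?L" "{vs ! j, y} = {vs ! m, vs ! ((m + 1) mod ?L)}"
    using assms(4) unfolding cycle_edges_def by blast
  have index_eq: "vs ! a = vs ! b \<longleftrightarrow> a = b" if "a < ?L" "b < ?L" for a b
    using nth_eq_iff_index_eq[OF assms(1) that] .
  have j: "j < ?L" using assms(3) by simp
  have succ: "(m + 1) mod ?L < ?L" using m(1) by (intro mod_less_divisor) linarith
  consider "vs ! j = vs ! m" "y = vs ! ((m + 1) mod ?L)" | "vs ! j = vs ! ((m + 1) mod ?L)" "y = vs ! m"
    using m(2) by (metis doubleton_eq_iff)
  then show ?thesis
  proof cases
    case 1
    then have "m = j" using index_eq j m(1) by simp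
    then show ?thesis using 1(2) assms(3) by simp
  next
    case 2
    then have j_eq: "(m + 1) mod ?L = j" using index_eq j succ by simp
    have "m + 1 < ?L"
    proof (rule ccontr)
      assume "\<not> m + 1 < ?L"
      then have "m + 1 = ?L" using m(1) by simp
      then show False using j_eq assms(2) by simp
    qed
    then have "m = j - 1" using j_eq by simp
    then show ?thesis using 2(2) by simp
  qed
qed

lemma cycle_list_eq_if_cycle_edges_eq:
  assumes "distinct vs" "distinct ws" "length vs = length ws" "cycle_edges vs = cycle_edges ws"
    and "vs ! 0 = ws ! 0" "vs ! 1 = ws ! 1"
  shows "vs = ws"
proof -
  let ?L = "length vs"
  have step: "vs ! Suc (Suc i) = ws ! Suc (Suc i)"
    if i: "Suc (Suc i) < ?L" "vs ! i = ws ! i" "vs ! Suc i = ws ! Suc i" for i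
  proof -
    have "(Suc i + 1) mod ?L = Suc (Suc i)" using i(1) by simp
    then have "{ws ! Suc i, ws ! Suc (Suc i)} \<in> cycle_edges ws"
      unfolding cycle_edges_def using i(1) assms(3) by (metis (mono_tags, lifting) Suc_lessD mem_Collect_eq)
    then have "{vs ! Suc i, ws ! Suc (Suc i)} \<in> cycle_edges vs" using assms(4) i(3) by simp
    then have "ws ! Suc (Suc i) = vs ! i \<or> ws ! Suc (Suc i) = vs ! Suc (Suc i)"
      using cycle_edges_neighbour[OF assms(1), of "Suc i"] i(1) by simp
    moreover have "ws ! Suc (Suc i) \<noteq> ws ! i"
      using nth_eq_iff_index_eq[OF assms(2)] i(1) assms(3) by simp
    ultimately show ?thesis using i(2) by auto
  qed
  have pairs: "Suc i < ?L \<longrightarrow> vs ! i = ws ! i \<and> vs ! Suc i = ws ! Suc i" for i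
    by (induction i) (use assms(5,6) step in auto)
  show ?thesis
  proof (rule nth_equalityI)
    fix i assume "i < ?L"
    then consider "Suc i < ?L" | "i = 0" | j where "i = Suc j" "Suc i = ?L"
      by (metis Suc_lessI not0_implies_Suc)
    then show "vs ! i = ws ! i" using pairs assms(5) by cases auto
  qed (fact assms(3))
qed

lemma cycle_subgraph_vertices:
  assumes "is_cycle_subgraph E k F"
  shows "finite (\<Union>F)" "card (\<Union>F) \<le> k"
proof -
  obtain vs where vs: "length vs = k" "3 \<le> k" "F = cycle_edges vs"
    using assms unfolding is_cycle_subgraph_def by blast
  then have "vs \<noteq> []" by auto
  then have "\<Union>F = set vs" using Union_cycle_edges vs(3) by simp
  then show "finite (\<Union>F)" "card (\<Union>F) \<le> k" using card_length[of vs] vs(1) by simp_all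
qed

lemma finite_cycle_subgraphs: "finite E \<Longrightarrow> finite {F. is_cycle_subgraph E k F}"
  by (rule finite_subset[of _ "Pow E"]) (auto simp: is_cycle_subgraph_def)

lemma card_cycle_lists_le:
  assumes "finite E"
  shows "card (cycle_lists E k) \<le> k ^ 2 * num_cycles E k"
proof -
  let ?C = "{F. is_cycle_subgraph E k F}" and ?f = "\<lambda>vs. (cycle_edges vs, vs ! 0, vs ! 1)"
  have image: "?f ` cycle_lists E k \<subseteq> (SIGMA F:?C. \<Union>F \<times> \<Union>F)"
  proof (rule image_subsetI)
    fix vs assume vs: "vs \<in> cycle_lists E k"
    have "vs ! 0 \<in> set vs" "vs ! 1 \<in> set vs" using cycle_listsD(1,2)[OF vs] by auto
    moreover have "\<Union> (cycle_edges vs) = set vs" by (rule Union_cycle_edges[OF cycle_listsD(4)[OF vs]])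
    moreover have "cycle_edges vs \<in> ?C" unfolding cycle_subgraphs_eq_image using vs by (rule imageI)
    ultimately show "?f vs \<in> (SIGMA F:?C. \<Union>F \<times> \<Union>F)" by simp
  qed
  have inj: "inj_on ?f (cycle_lists E k)"
  proof (rule inj_onI)
    fix vs ws assume vs: "vs \<in> cycle_lists E k" and ws: "ws \<in> cycle_lists E k" and "?f vs = ?f ws"
    then have "cycle_edges vs = cycle_edges ws" "vs ! 0 = ws ! 0" "vs ! 1 = ws ! 1" by simp_all
    then show "vs = ws"
      using cycle_listsD(1,3)[OF vs] cycle_listsD(1,3)[OF ws]
      by (intro cycle_list_eq_if_cycle_edges_eq) simp_all
  qed
  have "finite (SIGMA F:?C. \<Union>F \<times> \<Union>F)"
    using finite_cycle_subgraphs[OF assms] cycle_subgraph_vertices(1)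
    by (intro finite_SigmaI finite_cartesian_product) auto
  then have "card (cycle_lists E k) \<le> card (SIGMA F:?C. \<Union>F \<times> \<Union>F)"
    by (rule card_inj_on_le[OF inj image])
  also have "\<dots> = (\<Sum>F\<in>?C. card (\<Union>F) * card (\<Union>F))"
    using finite_cycle_subgraphs[OF assms] cycle_subgraph_vertices(1)
    by (simp add: card_SigmaI card_cartesian_product)
  also have "\<dots> \<le> (\<Sum>F\<in>?C. k * k)"
  proof (rule sum_mono)
    fix F assume "F \<in> ?C"
    then have "card (\<Union>F) \<le> k" using cycle_subgraph_vertices(2) by blast
    then show "card (\<Union>F) * card (\<Union>F) \<le> k * k" by (intro mult_le_mono)
  qed
  also have "\<dots> = card ?C * (k * k)" by simp
  finally show ?thesis unfolding num_cycles_def by (metis mult.commute power2_eq_square)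
qed

lemma cycle_list_edge:
  assumes "vs \<in> cycle_lists E k" "Suc i < k"
  shows "{vs ! i, vs ! Suc i} \<in> E"
proof -
  note cyc = cycle_listsD[OF assms(1)]
  have "{(vs @ [hd vs]) ! i, (vs @ [hd vs]) ! Suc i} \<in> E"
    using cyc(5) assms(2) cyc(1) unfolding walk_nth by simp
  then show ?thesis using assms(2) cyc(1) by (simp add: nth_append)
qed

lemma cycle_list_halves:
  assumes "vs \<in> cycle_lists E (2 * l)" "2 \<le> l"
  shows "is_path E (take l (tl vs))" "hd (take l (tl vs)) = vs ! 1" "last (take l (tl vs)) = vs ! l"
    and "is_path E (drop (Suc l) vs @ [vs ! 0])" "hd (drop (Suc l) vs @ [vs ! 0]) = vs ! Suc l"
    and "length (take l (tl vs)) = l" "length (drop (Suc l) vs @ [vs ! 0]) = l"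
    and "vs = vs ! 0 # take l (tl vs) @ drop (Suc l) vs"
proof -
  note cyc = cycle_listsD[OF assms(1)]
  have hd_vs: "hd vs = vs ! 0" using cyc(4) by (simp add: hd_conv_nth)
  have "take l (tl vs) = take l (drop 1 (vs @ [hd vs]))" using cyc(1) assms(2) by (simp add: drop_Suc)
  then have "walk E (take l (tl vs))" using walk_take[OF walk_drop[OF cyc(5)]] by metis
  moreover have "distinct (take l (tl vs))" using cyc(3) by (simp add: distinct_tl)
  ultimately show "is_path E (take l (tl vs))" unfolding is_path_def by simp
  show "length (take l (tl vs)) = l" "length (drop (Suc l) vs @ [vs ! 0]) = l"
    using cyc(1) assms(2) by simp_all
  have "take l (tl vs) \<noteq> []" using cyc(1) assms(2) by (cases vs) auto
  then show "hd (take l (tl vs)) = vs ! 1" "last (take l (tl vs)) = vs ! l"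
    using cyc(1) assms(2) by (simp_all add: hd_conv_nth last_conv_nth nth_tl)
  show "hd (drop (Suc l) vs @ [vs ! 0]) = vs ! Suc l"
    using cyc(1) assms(2) by (simp add: hd_append hd_drop_conv_nth)
  have "drop (Suc l) vs @ [vs ! 0] = drop (Suc l) (vs @ [hd vs])" using cyc(1) hd_vs assms(2) by simp
  then have "walk E (drop (Suc l) vs @ [vs ! 0])" using walk_drop[OF cyc(5)] by metis
  moreover have "vs ! 0 \<notin> set (drop (Suc l) vs)"
    using cyc(1,3) assms(2) by (auto simp: in_set_conv_nth nth_eq_iff_index_eq)
  then have "distinct (drop (Suc l) vs @ [vs ! 0])" using cyc(3) by simp
  ultimately show "is_path E (drop (Suc l) vs @ [vs ! 0])" unfolding is_path_def by simp
  show "vs = vs ! 0 # take l (tl vs) @ drop (Suc l) vs"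
    using cyc(4) hd_vs by (metis append_take_drop_id drop_Suc hd_Cons_tl)
qed

lemma cycle_list_eq_if_antipodal_eq:
  assumes "vs \<in> cycle_lists E (2 * l)" "ws \<in> cycle_lists E (2 * l)" "2 \<le> l" "girth_gt E (2 * l - 2)"
    and "vs ! 0 = ws ! 0" "vs ! 1 = ws ! 1" "vs ! l = ws ! l" "vs ! Suc l = ws ! Suc l"
  shows "vs = ws"
proof -
  note v = cycle_list_halves[OF assms(1,3)] and w = cycle_list_halves[OF assms(2,3)]
  have girth: "girth_gt E (l + l - 2)" using assms(4) by (simp add: mult_2)
  have "take l (tl vs) \<noteq> []" "take l (tl ws) \<noteq> []"
    using v(6) w(6) assms(3) by (metis list.size(3) not_numeral_le_zero)+
  have "take l (tl vs) = take l (tl ws)"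
    by (rule paths_eq_if_girth_gt[OF v(1) w(1)]) (use \<open>take l (tl vs) \<noteq> []\<close> \<open>take l (tl ws) \<noteq> []\<close> v(2,3,6) w(2,3,6) assms(3,5-8) girth in simp_all)
  moreover have "drop (Suc l) vs @ [vs ! 0] = drop (Suc l) ws @ [ws ! 0]"
    by (rule paths_eq_if_girth_gt[OF v(4) w(4)]) (use v(5,7) w(5,7) assms(3,5-8) girth in simp_all)
  ultimately show ?thesis using v(8) w(8) assms(5) by (metis butlast_snoc)
qed

lemma card_oriented_edges_le:
  assumes "finite V" "graph_on V E"
  shows "finite {(a, b). {a, b} \<in> E}" "card {(a, b). {a, b} \<in> E} \<le> 4 * card E"
proof -
  have fin_E: "finite E" using graph_on_finite[OF assms] .
  have card_e: "finite e \<and> card e = 2" if "e \<in> E" for e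
    using assms(2) that unfolding graph_on_def by auto
  have sub: "{(a, b). {a, b} \<in> E} \<subseteq> (\<Union>e\<in>E. e \<times> e)" by auto
  moreover have fin: "finite (\<Union>e\<in>E. e \<times> e)" using fin_E card_e by auto
  ultimately show "finite {(a, b). {a, b} \<in> E}" by (rule finite_subset)
  have "card {(a, b). {a, b} \<in> E} \<le> card (\<Union>e\<in>E. e \<times> e)" by (rule card_mono[OF fin sub])
  also have "\<dots> \<le> (\<Sum>e\<in>E. card (e \<times> e))" by (rule card_UN_le[OF fin_E])
  also have "\<dots> = (\<Sum>e\<in>E. 4)" using card_e by (intro sum.cong) (simp_all add: card_cartesian_product)
  also have "\<dots> = 4 * card E" by simp
  finally show "card {(a, b). {a, b} \<in> E} \<le> 4 * card E" .
qed

lemma card_cycle_lists_le_card_edges: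
  assumes "finite V" "graph_on V E" "2 \<le> l" "girth_gt E (2 * l - 2)"
  shows "card (cycle_lists E (2 * l)) \<le> 16 * card E ^ 2"
proof -
  let ?D = "{(a, b). {a, b} \<in> E}" and ?f = "\<lambda>vs. ((vs ! 0, vs ! 1), (vs ! l, vs ! Suc l))"
  have "?f ` cycle_lists E (2 * l) \<subseteq> ?D \<times> ?D"
    using cycle_list_edge[of _ E "2 * l" 0] cycle_list_edge[of _ E "2 * l" l] assms(3) by auto
  moreover have "inj_on ?f (cycle_lists E (2 * l))"
    using cycle_list_eq_if_antipodal_eq[OF _ _ assms(3,4)] by (intro inj_onI) simp
  moreover have "finite (?D \<times> ?D)" using card_oriented_edges_le[OF assms(1,2)] by simp
  ultimately have "card (cycle_lists E (2 * l)) \<le> card (?D \<times> ?D)"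
    using card_inj_on_le by blast
  also have "\<dots> \<le> (4 * card E) * (4 * card E)"
    using mult_le_mono[OF card_oriented_edges_le(2)[OF assms(1,2)] card_oriented_edges_le(2)[OF assms(1,2)]]
    by (simp add: card_cartesian_product)
  finally show ?thesis by (simp add: power2_eq_square)
qed

section \<open>Pairs of paths with common ends\<close>

lemma list_eq_hd_butlast_tl_last:
  assumes "2 \<le> length p"
  shows "p = hd p # butlast (tl p) @ [last p]"
  using assms by (cases p) (auto simp: append_butlast_last_id)

definition paths_between :: "'a set set \<Rightarrow> 'a set \<Rightarrow> nat \<Rightarrow> 'a \<Rightarrow> 'a \<Rightarrow> 'a list set" where
  "paths_between E W l a b = {p \<in> paths_from E W a l. last p = b}"

definition path_pairs :: "'a set set \<Rightarrow> 'a set \<Rightarrow> nat \<Rightarrow> ('a list \<times> 'a list) set" where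
  "path_pairs E W l = (\<Union>(a, b)\<in>W \<times> W.
     {(p, q). p \<in> paths_between E W l a b \<and> q \<in> paths_between E W l a b \<and> p \<noteq> q})"

lemma path_pairsE:
  assumes "(p, q) \<in> path_pairs E W l" "1 \<le> l"
  obtains a b us vs where "p = a # us @ [b]" "q = a # vs @ [b]" "us \<noteq> vs"
    "length us = l - 1" "length vs = l - 1" "is_path E (a # us @ [b])" "is_path E (a # vs @ [b])"
proof -
  obtain a b where p: "p \<in> paths_from E W a l" "last p = b" and q: "q \<in> paths_from E W a l" "last q = b"
    and "p \<noteq> q"
    using assms(1) unfolding path_pairs_def paths_between_def by blast
  note pD = paths_fromD[OF p(1)] and qD = paths_fromD[OF q(1)]
  have "2 \<le> length p" "2 \<le> length q" using pD(1) qD(1) assms(2) by simp_all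
  then have "p = a # butlast (tl p) @ [b]" "q = a # butlast (tl q) @ [b]"
    using list_eq_hd_butlast_tl_last[of p] list_eq_hd_butlast_tl_last[of q] pD(2) qD(2) p(2) q(2)
    by simp_all
  moreover from this have "butlast (tl p) \<noteq> butlast (tl q)" using \<open>p \<noteq> q\<close> by metis
  ultimately show thesis using that pD(1,3) qD(1,3) by (metis length_butlast length_tl diff_Suc_1)
qed

lemma join_path_pair_in_cycle_lists:
  assumes "(p, q) \<in> path_pairs E W l" "2 \<le> l" "girth_gt E (2 * l - 2)"
  shows "p @ rev (butlast (tl q)) \<in> cycle_lists E (2 * l)"
proof -
  obtain a b us vs where pq: "p = a # us @ [b]" "q = a # vs @ [b]" and "us \<noteq> vs"
    and len: "length us = l - 1" "length vs = l - 1"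
    and paths: "is_path E (a # us @ [b])" "is_path E (a # vs @ [b])"
    using path_pairsE[OF assms(1)] assms(2) by (metis one_le_numeral order_trans)
  have len_sum: "length us + length vs = 2 * l - 2" using len assms(2) by simp
  then have "set us \<inter> set vs = {}"
    using internally_disjoint_if_girth_gt[OF paths \<open>us \<noteq> vs\<close>] assms(3) by simp
  moreover have "us @ vs \<noteq> []" using len assms(2) by auto
  ultimately have "a # us @ b # rev vs \<in> cycle_lists E (length us + length vs + 2)"
    by (rule cycle_of_internally_disjoint_paths[OF paths])
  moreover have "length us + length vs + 2 = 2 * l" using len_sum assms(2) by simp
  ultimately show ?thesis using pq by simp
qed

lemma inj_on_join_path_pairs:
  assumes "1 \<le> l"
  shows "inj_on (\<lambda>(p, q). p @ rev (butlast (tl q))) (path_pairs E W l)"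
proof (rule inj_onI, clarify)
  fix p q p' q'
  assume pq: "(p, q) \<in> path_pairs E W l" and pq': "(p', q') \<in> path_pairs E W l"
    and eq: "p @ rev (butlast (tl q)) = p' @ rev (butlast (tl q'))"
  obtain a b us vs where p: "p = a # us @ [b]" "q = a # vs @ [b]" "length us = l - 1"
    using path_pairsE[OF pq assms] by metis
  obtain a' b' us' vs' where p': "p' = a' # us' @ [b']" "q' = a' # vs' @ [b']" "length us' = l - 1"
    using path_pairsE[OF pq' assms] by metis
  have "p @ rev vs = p' @ rev vs'" using eq p p' by simp
  moreover have "length p = length p'" using p p' by simp
  ultimately have "p = p'" "vs = vs'" by (simp_all add: append_eq_append_conv)
  then show "p = p' \<and> q = q'" using p p' by simp
qed

lemma card_path_pairs_le:
  assumes "finite V" "graph_on V E" "2 \<le> l" "girth_gt E (2 * l - 2)"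
  shows "card (path_pairs E W l) \<le> card (cycle_lists E (2 * l))"
proof (rule card_inj_on_le[OF inj_on_join_path_pairs _ finite_cycle_lists[OF assms(1,2)]])
  show "1 \<le> l" using assms(3) by simp
  show "(\<lambda>(p, q). p @ rev (butlast (tl q))) ` path_pairs E W l \<subseteq> cycle_lists E (2 * l)"
    using join_path_pair_in_cycle_lists assms(3,4) by fast
qed

lemma card_off_diagonal:
  assumes "finite X"
  shows "card {(p, q). p \<in> X \<and> q \<in> X \<and> p \<noteq> q} = card X * card X - card X"
proof -
  have "{(p, q). p \<in> X \<and> q \<in> X \<and> p \<noteq> q} = X \<times> X - (\<lambda>x. (x, x)) ` X" by auto
  moreover have "card ((\<lambda>x. (x, x)) ` X) = card X" by (rule card_image) (simp add: inj_on_def)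
  ultimately show ?thesis
    using assms by (simp add: card_Diff_subset card_cartesian_product image_subset_iff)
qed

lemma finite_paths_between: "finite W \<Longrightarrow> finite (paths_between E W l a b)"
  by (simp add: paths_between_def finite_paths_from)

lemma card_path_pairs:
  assumes "finite W"
  shows "real (card (path_pairs E W l)) =
    (\<Sum>(a, b)\<in>W \<times> W. real (card (paths_between E W l a b)) ^ 2)
      - (\<Sum>(a, b)\<in>W \<times> W. real (card (paths_between E W l a b)))"
proof -
  let ?P = "\<lambda>(a, b). paths_between E W l a b"
  let ?B = "\<lambda>ab. {(p, q). p \<in> ?P ab \<and> q \<in> ?P ab \<and> p \<noteq> q}"
  have fin_P: "finite (?P ab)" for ab using finite_paths_between[OF assms] by (simp split: prod.split)
  have "card (path_pairs E W l) = card (\<Union> (?B ` (W \<times> W)))"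
    unfolding path_pairs_def by (simp add: case_prod_beta)
  also have "\<dots> = (\<Sum>ab\<in>W \<times> W. card (?B ab))"
  proof (rule card_UN_disjoint)
    show "finite (W \<times> W)" using assms by simp
    show "\<forall>ab\<in>W \<times> W. finite (?B ab)"
    proof
      fix ab show "finite (?B ab)" by (rule finite_subset[of _ "?P ab \<times> ?P ab"]) (use fin_P in auto)
    qed
    show "\<forall>ab\<in>W \<times> W. \<forall>ab'\<in>W \<times> W. ab \<noteq> ab' \<longrightarrow> ?B ab \<inter> ?B ab' = {}"
      unfolding paths_between_def paths_from_def by (auto split: prod.splits)
  qed
  also have "\<dots> = (\<Sum>ab\<in>W \<times> W. card (?P ab) * card (?P ab) - card (?P ab))"
    using card_off_diagonal[OF fin_P] by simp
  finally have "real (card (path_pairs E W l)) = (\<Sum>ab\<in>W \<times> W. real (card (?P ab)) ^ 2 - real (card (?P ab)))"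
    by (simp add: of_nat_diff power2_eq_square le_square)
  then show ?thesis by (simp add: sum_subtractf case_prod_beta)
qed

lemma card_paths_from_eq_sum:
  assumes "finite W"
  shows "card (paths_from E W a l) = (\<Sum>b\<in>W. card (paths_between E W l a b))"
proof -
  have "paths_from E W a l = (\<Union>b\<in>W. paths_between E W l a b)"
  proof (intro equalityI subsetI)
    fix p assume p: "p \<in> paths_from E W a l"
    then have "p \<in> paths_between E W l a (last p)" unfolding paths_between_def by simp
    then show "p \<in> (\<Union>b\<in>W. paths_between E W l a b)" using paths_fromD(6)[OF p] by blast
  qed (auto simp: paths_between_def)
  also have "card \<dots> = (\<Sum>b\<in>W. card (paths_between E W l a b))"
    by (rule card_UN_disjoint) (use assms finite_paths_between in \<open>auto simp: paths_between_def\<close>)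
  finally show ?thesis .
qed

lemma half_square_le:
  fixes S w x :: real
  assumes "0 < w" "w * x \<le> S" "2 * w \<le> x"
  shows "x ^ 2 / 2 \<le> S ^ 2 / w ^ 2 - S"
proof -
  define t where "t = S / w"
  have "x \<le> t" using assms(1,2) unfolding t_def by (simp add: pos_le_divide_eq mult.commute)
  then have "x ^ 2 / 2 \<le> t ^ 2 / 2" using assms by (intro divide_right_mono power_mono) auto
  also have "\<dots> \<le> t * (t - w)"
  proof -
    have "t * (2 * w) \<le> t * t" using \<open>x \<le> t\<close> assms by (intro mult_left_mono) auto
    then show ?thesis by (simp add: power2_eq_square algebra_simps)
  qed
  also have "\<dots> = S ^ 2 / w ^ 2 - S"
    using assms(1) unfolding t_def by (simp add: field_simps power2_eq_square)
  finally show ?thesis .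
qed

lemma card_path_pairs_ge:
  assumes "finite W" "W \<noteq> {}" "\<forall>y. {y} \<notin> E" "\<forall>x\<in>W. d \<le> real (card (neighbours E W x))"
    and "1 \<le> d" "girth_gt E l" "2 * real (card W) \<le> (d - 1) ^ l"
  shows "(d - 1) ^ (2 * l) / 2 \<le> real (card (path_pairs E W l))"
proof -
  let ?c = "\<lambda>(a, b). real (card (paths_between E W l a b))"
  define w where "w = real (card W)"
  define S where "S = (\<Sum>ab\<in>W \<times> W. ?c ab)"
  have w_pos: "0 < w" unfolding w_def using assms(1,2) by (simp add: card_gt_0_iff)
  have "(\<Sum>a\<in>W. (d - 1) ^ l) \<le> (\<Sum>a\<in>W. real (card (paths_from E W a l)))"
    using card_paths_from_ge[OF assms(1) _ assms(3-6)] by (intro sum_mono) simp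
  also have "\<dots> = S"
    unfolding S_def card_paths_from_eq_sum[OF assms(1)] of_nat_sum
    by (simp add: sum.cartesian_product)
  finally have S_ge: "w * (d - 1) ^ l \<le> S" unfolding w_def by simp
  have "S\<^sup>2 \<le> (\<Sum>ab\<in>W \<times> W. (?c ab)\<^sup>2) * (\<Sum>ab\<in>W \<times> W. 1\<^sup>2)"
    using Cauchy_Schwarz_ineq_sum[of ?c "\<lambda>_. 1" "W \<times> W"] unfolding S_def by simp
  also have "(\<Sum>ab\<in>W \<times> W. (1::real)\<^sup>2) = w\<^sup>2"
    unfolding w_def by (simp add: card_cartesian_product power2_eq_square)
  finally have "S\<^sup>2 / w\<^sup>2 - S \<le> (\<Sum>ab\<in>W \<times> W. (?c ab)\<^sup>2) - S"
    using w_pos by (simp add: divide_le_eq)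
  also have "\<dots> = real (card (path_pairs E W l))"
    unfolding S_def using card_path_pairs[OF assms(1)] by (simp add: case_prod_beta)
  finally have "S\<^sup>2 / w\<^sup>2 - S \<le> real (card (path_pairs E W l))" .
  moreover have "((d - 1) ^ l)\<^sup>2 / 2 \<le> S\<^sup>2 / w\<^sup>2 - S"
    using half_square_le[OF w_pos S_ge] assms(7) unfolding w_def by simp
  ultimately show ?thesis by (simp add: power_mult[symmetric] mult.commute)
qed

section \<open>Large cuts\<close>

definition cut_edges :: "'a set \<Rightarrow> 'a set set \<Rightarrow> 'a set set" where
  "cut_edges A E = {e \<in> E. card (e \<inter> A) = 1}"

lemma cut_edges_subset: "cut_edges A E \<subseteq> E"
  unfolding cut_edges_def by blast

lemma cut_edges_insert_iff_not_remove:
  assumes "graph_on V E" "e \<in> E" "x \<in> e"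
  shows "e \<in> cut_edges (insert x A) E \<longleftrightarrow> e \<notin> cut_edges (A - {x}) E"
proof -
  obtain u where "e = {x, u}" "u \<noteq> x" using graph_on_edge_at[OF assms] by blast
  then show ?thesis using assms(2) unfolding cut_edges_def by (cases "u \<in> A") auto
qed

lemma cut_edges_eq_away:
  assumes "\<And>y. y \<noteq> x \<Longrightarrow> y \<in> B \<longleftrightarrow> y \<in> A"
  shows "cut_edges B E = cut_edges A {e \<in> E. x \<notin> e} \<union> {e \<in> cut_edges B E. x \<in> e}"
proof -
  have "e \<inter> B = e \<inter> A" if "x \<notin> e" for e
  proof -
    have "y \<in> e \<inter> B \<longleftrightarrow> y \<in> e \<inter> A" for y using assms[of y] that by (cases "y = x") auto
    then show ?thesis by blast
  qed
  then show ?thesis unfolding cut_edges_def by auto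
qed

lemma card_cut_edges_eq_away:
  assumes "finite E" "\<And>y. y \<noteq> x \<Longrightarrow> y \<in> B \<longleftrightarrow> y \<in> A"
  shows "card (cut_edges B E) = card (cut_edges A {e \<in> E. x \<notin> e}) + card {e \<in> cut_edges B E. x \<in> e}"
proof -
  have "card (cut_edges A {e \<in> E. x \<notin> e} \<union> {e \<in> cut_edges B E. x \<in> e}) =
      card (cut_edges A {e \<in> E. x \<notin> e}) + card {e \<in> cut_edges B E. x \<in> e}"
    by (rule card_Un_disjoint) (use assms(1) in \<open>auto simp: cut_edges_def\<close>)
  then show ?thesis using cut_edges_eq_away[OF assms(2)] by simp
qed

lemma exists_cut_edges_ge_half:
  assumes "finite V" "graph_on V E"
  shows "\<exists>A. card E \<le> 2 * card (cut_edges A E)"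
  using assms
proof (induction V arbitrary: E rule: finite_induct)
  case empty
  then show ?case unfolding graph_on_def by auto
next
  case (insert x V)
  let ?E' = "{e \<in> E. x \<notin> e}" and ?X = "{e \<in> E. x \<in> e}"
  have fin: "finite E" using graph_on_finite insert.hyps(1) insert.prems by blast
  have "graph_on V ?E'" using insert.prems unfolding graph_on_def by fastforce
  then obtain A where A: "card ?E' \<le> 2 * card (cut_edges A ?E')" using insert.IH by blast
  let ?C1 = "cut_edges (insert x A) E" and ?C2 = "cut_edges (A - {x}) E"
  have "card (?E' \<union> ?X) = card ?E' + card ?X" by (rule card_Un_disjoint) (use fin in auto)
  moreover have "?E' \<union> ?X = E" by auto
  ultimately have card_E: "card E = card ?E' + card ?X" by simp
  have "card ({e \<in> ?C1. x \<in> e} \<union> {e \<in> ?C2. x \<in> e}) =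
      card {e \<in> ?C1. x \<in> e} + card {e \<in> ?C2. x \<in> e}"
    by (rule card_Un_disjoint)
      (use fin cut_edges_insert_iff_not_remove[OF insert.prems] in \<open>auto simp: cut_edges_def\<close>)
  moreover have "{e \<in> ?C1. x \<in> e} \<union> {e \<in> ?C2. x \<in> e} = ?X"
    using cut_edges_insert_iff_not_remove[OF insert.prems] cut_edges_subset by blast
  ultimately have card_X: "card ?X = card {e \<in> ?C1. x \<in> e} + card {e \<in> ?C2. x \<in> e}" by simp
  have "card (?C1) = card (cut_edges A ?E') + card {e \<in> ?C1. x \<in> e}"
    by (rule card_cut_edges_eq_away[OF fin]) simp
  moreover have "card (?C2) = card (cut_edges A ?E') + card {e \<in> ?C2. x \<in> e}"
    by (rule card_cut_edges_eq_away[OF fin]) simp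
  ultimately have "card E \<le> 2 * card (?C1) \<or> card E \<le> 2 * card (?C2)"
    using A card_E card_X by linarith
  then show ?case by blast
qed

lemma walk_cut_parity:
  assumes "walk E w" "E \<subseteq> cut_edges A E" "\<forall>y. {y} \<notin> E" "i < length w"
  shows "w ! i \<in> A \<longleftrightarrow> (w ! 0 \<in> A \<longleftrightarrow> even i)"
  using assms(4)
proof (induction i)
  case (Suc i)
  have edge: "{w ! i, w ! Suc i} \<in> E" using assms(1) Suc.prems unfolding walk_nth by blast
  then have "w ! i \<noteq> w ! Suc i" using assms(3) by auto
  moreover have "card ({w ! i, w ! Suc i} \<inter> A) = 1" using edge assms(2) unfolding cut_edges_def by blast
  ultimately have "w ! i \<in> A \<longleftrightarrow> w ! Suc i \<notin> A"
    by (cases "w ! i \<in> A"; cases "w ! Suc i \<in> A") auto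
  moreover have "w ! i \<in> A \<longleftrightarrow> (w ! 0 \<in> A \<longleftrightarrow> even i)" using Suc by simp
  ultimately show ?case by (simp only: even_Suc) blast
qed simp

lemma even_if_has_cycle_cut:
  assumes "E \<subseteq> cut_edges A E" "\<forall>y. {y} \<notin> E" "has_cycle E k"
  shows "even k"
proof -
  obtain vs where vs: "vs \<in> cycle_lists E k" using assms(3) unfolding has_cycle_iff by blast
  note cyc = cycle_listsD[OF vs]
  have "(vs @ [hd vs]) ! k = (vs @ [hd vs]) ! 0"
    using cyc(1,4) by (simp add: nth_append hd_conv_nth)
  moreover have "(vs @ [hd vs]) ! k \<in> A \<longleftrightarrow> ((vs @ [hd vs]) ! 0 \<in> A \<longleftrightarrow> even k)"
    by (rule walk_cut_parity[OF cyc(5) assms(1,2)]) (simp add: cyc(1))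
  ultimately show ?thesis by (metis (full_types))
qed

lemma girth_gt_cut_edges:
  assumes "graph_on V E" "girth_gt E (2 * m)"
  shows "girth_gt (cut_edges A E) (Suc (2 * m))"
  unfolding girth_gt_def
proof (intro allI impI)
  fix k assume k: "has_cycle (cut_edges A E) k"
  have "cut_edges A E \<subseteq> cut_edges A (cut_edges A E)" unfolding cut_edges_def by blast
  moreover have "\<forall>y. {y} \<notin> cut_edges A E" using graph_on_no_loop[OF assms(1)] cut_edges_subset by blast
  ultimately have "even k" using even_if_has_cycle_cut k by blast
  moreover have "2 * m < k"
    using assms(2) girth_gt_subset[OF _ cut_edges_subset] k unfolding girth_gt_def by blast
  ultimately show "Suc (2 * m) < k" by presburger
qed

lemma num_cycles_ge_in_cut:
  assumes "finite V" "graph_on V E" "2 \<le> l" "girth_gt E (2 * (l - 1))"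
    and "2 \<le> D" "2 * D * real (card V) < real (card E)" "2 * real (card V) \<le> (D / 2) ^ l"
  shows "\<exists>A. (D / 2) ^ (2 * l) / (8 * real l ^ 2) \<le> real (num_cycles (cut_edges A E) (2 * l))"
proof -
  obtain A where A: "card E \<le> 2 * card (cut_edges A E)"
    using exists_cut_edges_ge_half[OF assms(1,2)] by blast
  let ?H = "cut_edges A E"
  have graph_H: "graph_on V ?H" using graph_on_subset[OF assms(2) cut_edges_subset] .
  have girth_H: "girth_gt ?H (2 * l - 1)"
    using girth_gt_cut_edges[OF assms(2,4)] assms(3) by (simp add: Suc_diff_Suc mult_2 numeral_2_eq_2)
  have dense: "D * real (card V) < real (card ?H)" using A assms(6) by linarith
  obtain W where W: "W \<subseteq> V" "W \<noteq> {}" "\<forall>x\<in>W. D < real (card (neighbours ?H W x))"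
    using subgraph_min_degree_gt[OF assms(1) graph_H dense] assms(5) by auto
  have D_half: "0 \<le> D / 2" "D / 2 \<le> D - 1" using assms(5) by simp_all
  have "2 * real (card W) \<le> 2 * real (card V)"
    using card_mono[OF assms(1) W(1)] by simp
  also have "\<dots> \<le> (D - 1) ^ l" using assms(7) power_mono[OF D_half(2,1), of l] by linarith
  finally have big: "2 * real (card W) \<le> (D - 1) ^ l" .
  have "(D - 1) ^ (2 * l) / 2 \<le> real (card (path_pairs ?H W l))"
  proof (rule card_path_pairs_ge[OF finite_subset[OF W(1) assms(1)] W(2) _ _ _ _ big])
    show "\<forall>y. {y} \<notin> ?H" using graph_on_no_loop[OF graph_H] by blast
    show "\<forall>x\<in>W. D \<le> real (card (neighbours ?H W x))" using W(3) less_imp_le by blast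
    show "1 \<le> D" using assms(5) by simp
    show "girth_gt ?H l" using girth_gt_mono[OF girth_H] assms(3) by simp
  qed
  also have "\<dots> \<le> real (card (cycle_lists ?H (2 * l)))"
    using card_path_pairs_le[OF assms(1) graph_H assms(3)] girth_gt_mono[OF girth_H] by simp
  also have "\<dots> \<le> real ((2 * l) ^ 2 * num_cycles ?H (2 * l))"
    by (rule of_nat_mono[OF card_cycle_lists_le[OF graph_on_finite[OF assms(1) graph_H]]])
  finally have "(D / 2) ^ (2 * l) / 2 \<le> 4 * real l ^ 2 * real (num_cycles ?H (2 * l))"
    using power_mono[OF D_half(2,1), of "2 * l"] by (simp add: power_mult_distrib)
  then show ?thesis using assms(3) by (intro exI[of _ A]) (simp add: field_simps)
qed

section \<open>The extremal number\<close>

lemma girth_gt_empty: "girth_gt {} m"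
proof -
  have nonempty: "cycle_edges vs \<noteq> {}" if "vs \<noteq> []" for vs :: "nat list"
  proof -
    have "0 < length vs" using that by simp
    then have "{vs ! 0, vs ! ((0 + 1) mod length vs)} \<in> cycle_edges vs" unfolding cycle_edges_def by blast
    then show ?thesis by blast
  qed
  have "cycle_lists {} k = {}" for k
  proof (rule equals0I)
    fix vs assume vs: "vs \<in> cycle_lists {} k"
    then have "cycle_edges vs = {}" unfolding cycle_lists_def by blast
    then show False using nonempty cycle_listsD(4)[OF vs] by blast
  qed
  then show ?thesis unfolding girth_gt_def has_cycle_iff by blast
qed

lemma ex_even_cycle_eq_Max:
  "ex_even_cycle l n =
    Max ((\<lambda>E. num_cycles E (2 * l)) ` {E. simple_graph n E \<and> girth_gt E (2 * l - 1)})"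
  unfolding ex_even_cycle_def girth_gt_iff setcompr_eq_image ..

lemma finite_simple_graphs: "finite {E. simple_graph n E \<and> P E}"
proof (rule finite_subset)
  show "{E. simple_graph n E \<and> P E} \<subseteq> Pow (Pow {0..<n})" unfolding simple_graph_def by auto
qed simp

lemma num_cycles_le_ex_even_cycle:
  assumes "simple_graph n E" "girth_gt E (2 * l - 1)"
  shows "num_cycles E (2 * l) \<le> ex_even_cycle l n"
  unfolding ex_even_cycle_eq_Max
  by (rule Max_ge[OF finite_imageI[OF finite_simple_graphs]]) (use assms in blast)

lemma ex_even_cycle_attained:
  obtains E where "simple_graph n E" "girth_gt E (2 * l - 1)" "ex_even_cycle l n = num_cycles E (2 * l)"
proof -
  have empty: "simple_graph n {}" unfolding simple_graph_def by simp
  have "ex_even_cycle l n \<in> (\<lambda>E. num_cycles E (2 * l)) ` {E. simple_graph n E \<and> girth_gt E (2 * l - 1)}"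
    unfolding ex_even_cycle_eq_Max
    by (rule Max_in[OF finite_imageI[OF finite_simple_graphs]]) (use empty girth_gt_empty in blast)
  then show thesis using that by blast
qed

lemma powr_two_l_div:
  assumes "0 < x" "2 \<le> l"
  shows "(x powr (1 / real (l - 1))) ^ (2 * l) = x powr (2 * real l / real (l - 1))"
    and "x ^ 2 * (x powr (1 / real (l - 1))) ^ 2 = x powr (2 * real l / real (l - 1))"
proof -
  let ?t = "x powr (1 / real (l - 1))"
  show t_2l: "?t ^ (2 * l) = x powr (2 * real l / real (l - 1))"
    using power_powr_one_div[OF assms(1), of "l - 1" "2 * l"] by simp
  have "?t ^ (l - 1) = x" using powr_one_div_power[OF assms(1), of "l - 1"] assms(2) by simp
  moreover have "(l - 1) * 2 + 2 = 2 * l" using assms(2) by simp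
  ultimately have "x ^ 2 * ?t ^ 2 = ?t ^ (2 * l)" by (metis power_add power_mult)
  then show "x ^ 2 * ?t ^ 2 = x powr (2 * real l / real (l - 1))" using t_2l by simp
qed

lemma ex_even_cycle_le:
  assumes "2 \<le> l" "0 < n"
  shows "real (ex_even_cycle l n) \<le> 144 * real n powr (2 * real l / real (l - 1))"
proof -
  define t where "t = real n powr (1 / real (l - 1))"
  obtain E where E: "simple_graph n E" "girth_gt E (2 * l - 1)" "ex_even_cycle l n = num_cycles E (2 * l)"
    using ex_even_cycle_attained by blast
  have graph: "graph_on {0..<n} E" using E(1) simple_graph_iff_graph_on by blast
  have "ex_even_cycle l n \<le> card (cycle_lists E (2 * l))"
    using E(3) num_cycles_le_card_cycle_lists[OF _ graph] by simp
  also have "\<dots> \<le> 16 * card E ^ 2"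
    using card_cycle_lists_le_card_edges[OF _ graph assms(1)] girth_gt_mono[OF E(2)] by simp
  finally have "real (ex_even_cycle l n) \<le> real (16 * card E ^ 2)" by (rule of_nat_mono)
  also have "\<dots> = 16 * real (card E) ^ 2" by simp
  also have "\<dots> \<le> 16 * (real n * (t + 2)) ^ 2"
  proof -
    have girth: "girth_gt E (2 * (l - 1))" using girth_gt_mono[OF E(2)] by simp
    have "real (card E) \<le> real n * (t + 2)"
      using moore_bound[OF E(1) _ girth] assms(1) unfolding t_def by simp
    then show ?thesis by (intro mult_left_mono power_mono) simp_all
  qed
  also have "\<dots> \<le> 16 * (real n * (3 * t)) ^ 2"
    using ge_one_powr_ge_zero[of "real n" "1 / real (l - 1)"] assms(2) unfolding t_def
    by (intro mult_left_mono power_mono) auto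
  also have "\<dots> = 144 * (real n ^ 2 * t ^ 2)" by (simp add: power_mult_distrib)
  also have "\<dots> = 144 * real n powr (2 * real l / real (l - 1))"
    using powr_two_l_div(2)[of "real n" l] assms unfolding t_def by simp
  finally show ?thesis .
qed

lemma ex_even_cycle_ge_cut:
  assumes "2 \<le> l" "simple_graph n E" "girth_gt E (2 * (l - 1))"
    and "2 \<le> D" "2 * D * real n < real (card E)" "2 * real n \<le> (D / 2) ^ l"
  shows "(D / 2) ^ (2 * l) / (8 * real l ^ 2) \<le> real (ex_even_cycle l n)"
proof -
  have graph: "graph_on {0..<n} E" using assms(2) simple_graph_iff_graph_on by blast
  obtain A where A: "(D / 2) ^ (2 * l) / (8 * real l ^ 2) \<le> real (num_cycles (cut_edges A E) (2 * l))"
    using num_cycles_ge_in_cut[OF finite_atLeastLessThan graph assms(1,3,4)] assms(5,6) by auto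
  have "simple_graph n (cut_edges A E)"
    using graph_on_subset[OF graph cut_edges_subset] simple_graph_iff_graph_on by blast
  moreover have "girth_gt (cut_edges A E) (2 * l - 1)"
  proof -
    have "Suc (2 * (l - 1)) = 2 * l - 1" using assms(1) by simp
    then show ?thesis using girth_gt_cut_edges[OF graph assms(3)] by metis
  qed
  ultimately have "num_cycles (cut_edges A E) (2 * l) \<le> ex_even_cycle l n"
    by (rule num_cycles_le_ex_even_cycle)
  then have "real (num_cycles (cut_edges A E) (2 * l)) \<le> real (ex_even_cycle l n)" by (rule of_nat_mono)
  with A show ?thesis by linarith
qed

lemma ex_even_cycle_ge:
  assumes "2 \<le> l" "0 < c" "simple_graph n E" "girth_gt E (2 * (l - 1))"
    and "c * real n powr (1 + 1 / real (l - 1)) \<le> real (card E)"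
    and "8 / c \<le> real n powr (1 / real (l - 1))" "2 / (c / 8) ^ l \<le> real n powr (1 / real (l - 1))"
  shows "(c / 8) ^ (2 * l) / (8 * real l ^ 2) * real n powr (2 * real l / real (l - 1))
    \<le> real (ex_even_cycle l n)"
proof -
  define t where "t = real n powr (1 / real (l - 1))"
  define D where "D = c * t / 4"
  have "0 < 8 / c" using assms(2) by simp
  then have t_pos: "0 < t" using assms(6) unfolding t_def by linarith
  then have n_pos: "0 < n" unfolding t_def by (cases n) auto
  have "t ^ (l - 1) = real n"
    unfolding t_def using powr_one_div_power[of "real n" "l - 1"] n_pos assms(1) by simp
  moreover have "l = Suc (l - 1)" using assms(1) by simp
  ultimately have t_pow_l: "t ^ l = t * real n" by (metis power_Suc)
  have D_ge_2: "2 \<le> D" using assms(2,6) unfolding D_def t_def by (simp add: field_simps)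
  have "real n powr (1 + 1 / real (l - 1)) = c * t * real n / c"
    unfolding t_def using n_pos assms(2) by (simp add: powr_add)
  then have "c * t * real n \<le> real (card E)" using assms(2,5) by simp
  moreover have "0 < c * t * real n" using assms(2) t_pos n_pos by simp
  moreover have "2 * D * real n = c * t * real n / 2" unfolding D_def by simp
  ultimately have dense: "2 * D * real n < real (card E)" by linarith
  have "2 \<le> (c / 8) ^ l * t" using assms(2,7) unfolding t_def by (simp add: field_simps)
  then have "2 * real n \<le> (c / 8) ^ l * t * real n" using n_pos by simp
  also have "\<dots> = (c / 8) ^ l * t ^ l" using t_pow_l by simp
  also have "\<dots> = (D / 2) ^ l" unfolding D_def by (simp add: power_mult_distrib[symmetric])
  finally have sparse: "2 * real n \<le> (D / 2) ^ l" .
  have "(D / 2) ^ (2 * l) = (c / 8) ^ (2 * l) * t ^ (2 * l)"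
    unfolding D_def by (simp add: power_mult_distrib[symmetric])
  also have "\<dots> = (c / 8) ^ (2 * l) * real n powr (2 * real l / real (l - 1))"
    unfolding t_def using powr_two_l_div(1)[of "real n" l] n_pos assms(1) by simp
  finally show ?thesis
    using ex_even_cycle_ge_cut[OF assms(1,3,4) D_ge_2 dense sparse] by simp
qed

lemma eventually_le_powr_one_div:
  assumes "k \<noteq> 0"
  shows "\<forall>\<^sub>F n in sequentially. M \<le> real n powr (1 / real k)"
proof -
  define M' where "M' = max M 1"
  have "\<forall>\<^sub>F n in sequentially. M' ^ k \<le> real n"
    using filterlim_real_sequentially unfolding filterlim_at_top by blast
  then show ?thesis
  proof (rule eventually_mono)
    fix n :: nat assume "M' ^ k \<le> real n"
    then have "(M' ^ k) powr (1 / real k) \<le> real n powr (1 / real k)"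
      by (intro powr_mono2) (auto simp: M'_def)
    moreover have "(M' ^ k) powr (1 / real k) = M'"
      unfolding M'_def using assms by (simp add: powr_realpow[symmetric] powr_powr)
    ultimately show "M \<le> real n powr (1 / real k)" unfolding M'_def by linarith
  qed
qed

lemma eventually_ex_even_cycle_ge:
  assumes "2 \<le> l" "0 < c"
    and "\<forall>\<^sub>F n in sequentially. \<exists>E. simple_graph n E
      \<and> c * real n powr (1 + 1 / real (l - 1)) \<le> real (card E) \<and> girth_gt E (2 * (l - 1))"
  shows "\<forall>\<^sub>F n in sequentially.
    (c / 8) ^ (2 * l) / (8 * real l ^ 2) * real n powr (2 * real l / real (l - 1)) \<le> real (ex_even_cycle l n)"
proof -
  have "\<forall>\<^sub>F n in sequentially. max (8 / c) (2 / (c / 8) ^ l) \<le> real n powr (1 / real (l - 1))"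
    by (rule eventually_le_powr_one_div) (use assms(1) in simp)
  with assms(3) show ?thesis
  proof eventually_elim
    case (elim n)
    then obtain E where "simple_graph n E" "c * real n powr (1 + 1 / real (l - 1)) \<le> real (card E)"
      "girth_gt E (2 * (l - 1))" by blast
    then show ?case using ex_even_cycle_ge[OF assms(1,2)] elim(2) by simp
  qed
qed

theorem corollary1:
  fixes l :: nat
  assumes "l \<ge> 3"
    and girth_conj: "\<exists>c::real. c > 0 \<and> (\<forall>\<^sub>F n in sequentially. \<exists>E. simple_graph n E
            \<and> real (card E) \<ge> c * real n powr (1 + 1 / real (l - 1))
            \<and> (\<forall>k. has_cycle E k \<longrightarrow> k > 2 * (l - 1)))"
  shows "(\<lambda>n. real (ex_even_cycle l n)) \<in> \<Theta>(\<lambda>n. real n powr (2 * real l / real (l - 1)))"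
proof -
  obtain c :: real where c: "c > 0" and girth_graphs: "\<forall>\<^sub>F n in sequentially. \<exists>E. simple_graph n E
      \<and> c * real n powr (1 + 1 / real (l - 1)) \<le> real (card E) \<and> girth_gt E (2 * (l - 1))"
    using girth_conj unfolding girth_gt_def by blast
  have l: "2 \<le> l" using assms(1) by simp
  let ?c = "(c / 8) ^ (2 * l) / (8 * real l ^ 2)" and ?g = "\<lambda>n. real n powr (2 * real l / real (l - 1))"
  have "\<forall>\<^sub>F n in sequentially. ?c * norm (?g n) \<le> norm (real (ex_even_cycle l n))
      \<and> norm (real (ex_even_cycle l n)) \<le> 144 * norm (?g n)"
    using eventually_ex_even_cycle_ge[OF l c girth_graphs] eventually_gt_at_top[of 0]
    by eventually_elim (use ex_even_cycle_le[OF l] in auto)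
  then show ?thesis by (rule bigthetaI'[rotated 2]) (use c l in simp_all)
qed

end
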